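(* Let $\mathcal{X}$ and $\mathcal{Y}$ be finite subsets of $\mathbb{R}$, each with $N$ elements. Let $S$ be a binary random variable with values $s_0,s_1$, $\mathbb{P}(S=s_0)>0$, $\mathbb{P}(S=s_1)>0$, and $X$ a random variable with values in $\mathcal{X}$ with $P^X_i=\mathbb{P}(X=i)>0$ for all $i\in\mathcal{X}$. Let $P^{X_{s}}_i=\mathbb{P}(X=i\mid S=s)$ for $s\in\{s_0,s_1\}$ (equal to $0$ for $i$ outside the support of $X$ given $S=s$). Let $P^{\tilde X}\in\mathbb{R}^{\mathcal{Y}}$ be a probability vector, $\gamma\in\Pi(P^X,P^{\tilde X})$, and let $\tilde X$ be the projected variable defined by: conditionally on $(X,S)=(i,s)$, $\tilde X=j$ with probability $\gamma_{i,j}/P^X_i$. Write $P^{\tilde X_s}_j=\mathbb{P}(\tilde X=j\mid S=s)$ and define the vector $V\in\mathbb{R}^{\mathcal{X}}$ by $$V=\frac{P^{X_{s_0}}-P^{X_{s_1}}}{P^X}\quad(\text{element-wise}).$$ Then $P^{\tilde X_{s_0}}-P^{\tilde X_{s_1}}=\gamma' V$. Consequently, if total repair holds, i.e. $P^{\tilde X_{s_0}}=P^{\tilde X_{s_1}}$, then the coupling satisfies $\gamma'V=\mathbb{0}$, where $\mathbb{0}\in\mathbb{R}^{N}$ is the zero vector.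
   Context: For probability vectors $P,Q$, $\Pi(P,Q)=\{\gamma\in\mathbb{R}_+^{\mathcal{X}\times\mathcal{Y}}:\gamma\mathbb{1}=P,\ \gamma'\mathbb{1}=Q\}$, where $\mathbb{1}$ is the all-ones vector and $\gamma'$ the transpose. "Total repair" means the conditional distributions of the projected feature $\tilde X$ given $S=s_0$ and given $S=s_1$ coincide. *)

theory Defs
  imports "HOL-Probability.Probability_Mass_Function"
begin

definition couplings :: "real set \<Rightarrow> real set \<Rightarrow> (real \<Rightarrow> real) \<Rightarrow> (real \<Rightarrow> real)
    \<Rightarrow> (real \<Rightarrow> real \<Rightarrow> real) set" where
  "couplings Xs Ys P Q = {\<gamma>. (\<forall>i\<in>Xs. \<forall>j\<in>Ys. \<gamma> i j \<ge> 0)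
      \<and> (\<forall>i\<in>Xs. (\<Sum>j\<in>Ys. \<gamma> i j) = P i)
      \<and> (\<forall>j\<in>Ys. (\<Sum>i\<in>Xs. \<gamma> i j) = Q j)}"

definition prob_vector :: "real set \<Rightarrow> (real \<Rightarrow> real) \<Rightarrow> bool" where
  "prob_vector Ys Q \<longleftrightarrow> (\<forall>j\<in>Ys. Q j \<ge> 0) \<and> (\<Sum>j\<in>Ys. Q j) = 1"

definition cond_prob :: "'a pmf \<Rightarrow> 'a set \<Rightarrow> 'a set \<Rightarrow> real" where
  "cond_prob M A B = measure_pmf.prob M (A \<inter> B) / measure_pmf.prob M B"

end

theory Submission
  imports Defs
begin

text \<open>Conditioning on \<open>S = s\<close> and summing over the values \<open>i\<close> of \<open>X\<close> gives
  \<open>P(X\<^sub>t = j | S = s) = \<Sum>\<^sub>i \<gamma>\<^sub>i\<^sub>j / P\<^sup>X\<^sub>i * P(X = i | S = s)\<close>, since the transport kernel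
  \<open>P(X\<^sub>t = j | X = i, S = s) = \<gamma>\<^sub>i\<^sub>j / P\<^sup>X\<^sub>i\<close> does not depend on \<open>s\<close>. Subtracting the instances for
  \<open>s\<^sub>0\<close> and \<open>s\<^sub>1\<close> yields \<open>\<gamma>' V\<close>.\<close>

lemma measure_pmf_prob_eq_sum_fibres:
  fixes M :: "'a pmf" and X :: "'a \<Rightarrow> 'b"
  assumes "finite I" and "X ` set_pmf M \<subseteq> I"
  shows "measure_pmf.prob M A = (\<Sum>i\<in>I. measure_pmf.prob M (A \<inter> {\<omega>. X \<omega> = i}))"
proof -
  have "measure_pmf.prob M A = measure_pmf.prob M (A \<inter> set_pmf M)"
    by (simp add: measure_Int_set_pmf)
  also have "A \<inter> set_pmf M = (\<Union>i\<in>I. A \<inter> {\<omega>. X \<omega> = i} \<inter> set_pmf M)"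
    using assms(2) by fastforce
  also have "measure_pmf.prob M \<dots> = (\<Sum>i\<in>I. measure_pmf.prob M (A \<inter> {\<omega>. X \<omega> = i} \<inter> set_pmf M))"
    by (rule measure_pmf.finite_measure_finite_Union) (auto simp: assms(1) disjoint_family_on_def)
  also have "\<dots> = (\<Sum>i\<in>I. measure_pmf.prob M (A \<inter> {\<omega>. X \<omega> = i}))"
    by (simp add: measure_Int_set_pmf)
  finally show ?thesis .
qed

text \<open>No positivity of \<open>P(B)\<close> is needed: on a null event both sides vanish, as \<open>x / 0 = 0\<close>.\<close>

lemma measure_pmf_prob_Int_eq_cond_prob_mult:
  "measure_pmf.prob M (A \<inter> B) = cond_prob M A B * measure_pmf.prob M B"
proof (cases "measure_pmf.prob M B = 0")
  case True
  have "measure_pmf.prob M (A \<inter> B) \<le> measure_pmf.prob M B"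
    by (rule measure_pmf.finite_measure_mono) auto
  with True show ?thesis
    by (simp add: order_antisym)
next
  case False
  then show ?thesis
    by (simp add: cond_prob_def)
qed

lemma cond_prob_eq_sum_fibres:
  fixes M :: "'a pmf" and X :: "'a \<Rightarrow> 'b"
  assumes "finite I" and "X ` set_pmf M \<subseteq> I"
    and kernel: "\<And>i. i \<in> I \<Longrightarrow> measure_pmf.prob M (B \<inter> {\<omega>. X \<omega> = i}) > 0 \<Longrightarrow>
                   cond_prob M A (B \<inter> {\<omega>. X \<omega> = i}) = c i"
  shows "cond_prob M A B = (\<Sum>i\<in>I. c i * cond_prob M {\<omega>. X \<omega> = i} B)"
proof -
  have fibre: "measure_pmf.prob M (A \<inter> (B \<inter> {\<omega>. X \<omega> = i}))
      = c i * measure_pmf.prob M ({\<omega>. X \<omega> = i} \<inter> B)" if "i \<in> I" for i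
  proof (cases "measure_pmf.prob M (B \<inter> {\<omega>. X \<omega> = i}) > 0")
    case True
    then show ?thesis
      using kernel[OF that] measure_pmf_prob_Int_eq_cond_prob_mult[of M A "B \<inter> {\<omega>. X \<omega> = i}"]
      by (simp add: Int_commute)
  next
    case False
    then have "measure_pmf.prob M (B \<inter> {\<omega>. X \<omega> = i}) = 0"
      by (simp add: order_less_le)
    then show ?thesis
      using measure_pmf_prob_Int_eq_cond_prob_mult[of M A "B \<inter> {\<omega>. X \<omega> = i}"]
      by (simp add: Int_commute)
  qed
  have "cond_prob M A B = measure_pmf.prob M (A \<inter> B) / measure_pmf.prob M B"
    by (simp add: cond_prob_def)
  also have "\<dots> = (\<Sum>i\<in>I. c i * measure_pmf.prob M ({\<omega>. X \<omega> = i} \<inter> B)) / measure_pmf.prob M B"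
    using measure_pmf_prob_eq_sum_fibres[OF assms(1,2), of "A \<inter> B"] fibre
    by (simp add: Int_assoc)
  also have "\<dots> = (\<Sum>i\<in>I. c i * cond_prob M {\<omega>. X \<omega> = i} B)"
    by (simp add: cond_prob_def sum_divide_distrib)
  finally show ?thesis .
qed

theorem mainTheorem2:
  fixes Xs Ys :: "real set" and N :: nat
    and M :: "('s \<times> real \<times> real) pmf"
    and s0 s1 :: 's
    and PXt :: "real \<Rightarrow> real"
    and \<gamma> :: "real \<Rightarrow> real \<Rightarrow> real"
  defines "PX \<equiv> \<lambda>i. measure_pmf.prob M {(s, x, xt). x = i}"
  defines "PXs \<equiv> \<lambda>s i. cond_prob M {(s', x, xt). x = i} {(s', x, xt). s' = s}"
  defines "PXts \<equiv> \<lambda>s j. cond_prob M {(s', x, xt). xt = j} {(s', x, xt). s' = s}"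
  defines "V \<equiv> \<lambda>i. (PXs s0 i - PXs s1 i) / PX i"
  assumes "finite Xs" and "finite Ys" and "card Xs = N" and "card Ys = N"
    and "s0 \<noteq> s1"
    and "\<forall>(s, x, xt) \<in> set_pmf M. s \<in> {s0, s1} \<and> x \<in> Xs"
    and "measure_pmf.prob M {(s, x, xt). s = s0} > 0"
    and "measure_pmf.prob M {(s, x, xt). s = s1} > 0"
    and "\<forall>i\<in>Xs. PX i > 0"
    and "prob_vector Ys PXt"
    and "\<gamma> \<in> couplings Xs Ys PX PXt"
    and "\<forall>i\<in>Xs. \<forall>s\<in>{s0, s1}. measure_pmf.prob M {(s', x, xt). s' = s \<and> x = i} > 0 \<longrightarrow>
           (\<forall>j\<in>Ys. cond_prob M {(s', x, xt). xt = j} {(s', x, xt). s' = s \<and> x = i}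
                     = \<gamma> i j / PX i)"
  shows "(\<forall>j\<in>Ys. PXts s0 j - PXts s1 j = (\<Sum>i\<in>Xs. \<gamma> i j * V i))
       \<and> ((\<forall>j. PXts s0 j = PXts s1 j) \<longrightarrow> (\<forall>j\<in>Ys. (\<Sum>i\<in>Xs. \<gamma> i j * V i) = 0))"
proof -
  define X :: "'s \<times> real \<times> real \<Rightarrow> real" where "X = (\<lambda>(s, x, xt). x)"
  have X_range: "X ` set_pmf M \<subseteq> Xs"
    using assms(10) by (auto simp: X_def)
  have fibre_X: "{\<omega>. X \<omega> = i} = {(s', x, xt). x = i}" for i
    by (auto simp: X_def)
  have fibre_SX: "{(s', x, xt). s' = s} \<inter> {\<omega>. X \<omega> = i} = {(s', x, xt). s' = s \<and> x = i}" for s i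
    by (auto simp: X_def)
  have total: "PXts s j = (\<Sum>i\<in>Xs. \<gamma> i j / PX i * PXs s i)" if "s \<in> {s0, s1}" "j \<in> Ys" for s j
    unfolding PXts_def PXs_def
  proof (rule cond_prob_eq_sum_fibres[OF assms(5) X_range, where B = "{(s', x, xt). s' = s}",
        unfolded fibre_SX, unfolded fibre_X])
    show "cond_prob M {(s', x, xt). xt = j} {(s', x, xt). s' = s \<and> x = i} = \<gamma> i j / PX i"
      if "i \<in> Xs" and "measure_pmf.prob M {(s', x, xt). s' = s \<and> x = i} > 0" for i
      using assms(16) \<open>s \<in> {s0, s1}\<close> \<open>j \<in> Ys\<close> that by blast
  qed
  have "PXts s0 j - PXts s1 j = (\<Sum>i\<in>Xs. \<gamma> i j * V i)" if "j \<in> Ys" for j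
    using total[OF _ that, of s0] total[OF _ that, of s1]
    by (simp add: V_def sum_subtractf[symmetric] diff_divide_distrib right_diff_distrib)
  then show ?thesis
    by auto
qed

end
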